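(* (1) Let $(w_n)_{n\ge1}$ be a bounded sequence of positive reals with $\lim_{n\to\infty}w_1w_2\cdots w_n=\infty$. Then the unilateral backward shift $B_w$ on $\ell^\infty$, $(B_wy)_n=w_{n+1}y_{n+1}$, is frequently hypercyclic with respect to the weak$^*$-topology $\sigma(\ell^\infty,\ell^1)$. (2) Let $(w_n)_{n\in\mathbb{Z}}$ be a bounded sequence of positive reals with $\lim_{n\to\infty}w_1w_2\cdots w_n=\infty$ and $\lim_{n\to\infty}w_{-1}w_{-2}\cdots w_{-n}=0$. Then the bilateral backward shift $T_w$ on $\ell^\infty(\mathbb{Z})$, $(T_wy)_n=w_{n+1}y_{n+1}$ ($n\in\mathbb{Z}$), is frequently hypercyclic with respect to the weak$^*$-topology $\sigma(\ell^\infty(\mathbb{Z}),\ell^1(\mathbb{Z}))$.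
   Context: An operator $T$ on a topological vector space $(Y,\tau)$ is frequently hypercyclic with respect to $\tau$ if there is $y\in Y$ such that for every nonempty $\tau$-open $U$ the set $A=\{n\in\mathbb{N}:T^ny\in U\}$ has positive lower density $\liminf_{N\to\infty}\mathrm{card}\{n\in A:n\le N\}/N>0$. *)

theory Defs
  imports "HOL-Analysis.Analysis" "HOL-Library.Liminf_Limsup"
begin

definition linf :: "('i \<Rightarrow> real) set" where
  "linf = {y. bounded (range y)}"

definition ell1 :: "('i \<Rightarrow> real) set" where
  "ell1 = {a. (\<lambda>i. \<bar>a i\<bar>) summable_on UNIV}"

definition weak_star :: "('i \<Rightarrow> real) topology" where
  "weak_star = subtopology
     (topology_generated_by {{y. (\<Sum>\<^sub>\<infinity>i. a i * y i) \<in> V} | a V. a \<in> ell1 \<and> open V}) linf"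

definition lower_density :: "nat set \<Rightarrow> ereal" where
  "lower_density A = liminf (\<lambda>N. ereal (real (card {n \<in> A. 1 \<le> n \<and> n \<le> N}) / real N))"

definition freq_hypercyclic :: "'a topology \<Rightarrow> ('a \<Rightarrow> 'a) \<Rightarrow> bool" where
  "freq_hypercyclic X T \<longleftrightarrow>
     (\<exists>y \<in> topspace X. \<forall>U. openin X U \<and> U \<noteq> {} \<longrightarrow> lower_density {n. (T ^^ n) y \<in> U} > 0)"

definition wshift :: "('i::{plus,one} \<Rightarrow> real) \<Rightarrow> ('i \<Rightarrow> real) \<Rightarrow> ('i \<Rightarrow> real)" where
  "wshift w y = (\<lambda>n. w (n + 1) * y (n + 1))"

end

theory Submission
  imports Defs
begin

text \<open>Let W be the partial products of the weights, so that the orbit of the shift is explicit: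
  (B^n y)(i) = W(i+n) / W(i) * y(i+n). Enumerate all finitely supported rational patterns p_k and
  choose sets A(k) of positive lower density whose elements are far apart. The vector y carries,
  for every n in A(k), the values p_k(t) W(t) / W(t+n) at the positions t+n, so that B^n y coincides
  with p_k on the support of p_k. Since W tends to infinity, large gaps make y and all other
  contributions to B^n y bounded by 1. On bounded sets, weak-star closeness only requires closeness
  on finitely many coordinates, so every nonempty weak-star open set is visited along some A(k).\<close>

section \<open>Separated sets of positive lower density\<close>

text \<open>Block (k, t) is the interval [2^(k+t+2) - 2^(t+1), 2^(k+t+2) - 2^t) of length 2^t. For fixed
  k + t these blocks tile [2^(k+t+1), 2^(k+t+2)), hence all blocks are pairwise disjoint.\<close>

definition block_start :: "nat \<Rightarrow> nat \<Rightarrow> nat" where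
  "block_start k t = 2^(k+t+2) - 2^(t+1)"

lemma block_start_ge: "2^(k+t+1) \<le> block_start k t"
proof -
  have "(2::nat)^(t+1) \<le> 2^(k+t+1)" by (rule power_increasing) simp_all
  moreover have "(2::nat)^(k+t+2) = 2^(k+t+1) + 2^(k+t+1)" by simp
  ultimately show ?thesis unfolding block_start_def by linarith
qed

lemma block_end_eq: "block_start k t + 2^t = 2^(k+t+2) - 2^t"
proof -
  have "(2::nat)^(t+1) \<le> 2^(k+t+2)" by (rule power_increasing) simp_all
  moreover have "(2::nat)^(t+1) = 2^t + 2^t" by simp
  ultimately show ?thesis unfolding block_start_def by linarith
qed

lemma block_end_le: "block_start k t + 2^t \<le> 2^(k+t+2)"
  unfolding block_end_eq by simp

lemma block_precedes:
  assumes "k + t < l + t' \<or> (k + t = l + t' \<and> t' < t)"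
  shows "block_start k t + 2^t \<le> block_start l t'"
  using assms
proof
  assume "k + t < l + t'"
  then have "(2::nat)^(k+t+2) \<le> 2^(l+t'+1)" by (intro power_increasing) simp_all
  then show ?thesis using block_end_le[of k t] block_start_ge[of l t'] by linarith
next
  assume eq: "k + t = l + t' \<and> t' < t"
  then have "(2::nat)^(t'+1) \<le> 2^t" by (intro power_increasing) simp_all
  then have "2^(k+t+2) - 2^t \<le> 2^(l+t'+2) - (2::nat)^(t'+1)"
    using eq by (simp add: diff_le_mono2)
  then show ?thesis by (simp add: block_end_eq block_start_def[of l t'])
qed

lemma blocks_disjoint:
  assumes "(k,t) \<noteq> (l,t')"
  shows "block_start k t + 2^t \<le> block_start l t' \<or> block_start l t' + 2^t' \<le> block_start k t"
  using block_precedes[of k t l t'] block_precedes[of l t' k t] assms by fastforce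

text \<open>The points of spacing 2^(N k + 1) inside the blocks (k, t) with t > N k: the spacing and the
  disjointness of blocks keep points of different sets apart, and the block just below a given
  bound M contains a fixed proportion of [1, M].\<close>

definition separated_set :: "(nat \<Rightarrow> nat) \<Rightarrow> nat \<Rightarrow> nat set" where
  "separated_set N k = {block_start k t + 2^(N k + 1) * j | t j. N k + 1 \<le> t \<and> 0 < j \<and> j < 2^(t - (N k + 1))}"

lemma block_multiple_bounds:
  assumes "s \<le> t" "0 < j" "j < 2^(t - s)"
  shows "block_start k t + 2^s \<le> block_start k t + 2^s * j"
    and "block_start k t + 2^s * j + 2^s \<le> block_start k t + 2^t"
proof -
  show "block_start k t + 2^s \<le> block_start k t + 2^s * j" using assms(2) by simp
  have "2^s * (j + 1) \<le> (2::nat)^s * 2^(t - s)" using assms(3) by (intro mult_le_mono2) simp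
  also have "\<dots> = 2^t" using assms(1) by (simp flip: power_add)
  finally show "block_start k t + 2^s * j + 2^s \<le> block_start k t + 2^t" by simp
qed

lemma double_le_two_power: "2 * n \<le> (2::nat)^(n+1)"
  using less_exp[of n] by simp

lemma separated_set_ge: "n \<in> separated_set N k \<Longrightarrow> N k \<le> n"
proof -
  assume "n \<in> separated_set N k"
  then obtain t j where n: "n = block_start k t + 2^(N k + 1) * j" "N k + 1 \<le> t" "0 < j"
    "j < 2^(t - (N k + 1))"
    unfolding separated_set_def by blast
  show ?thesis using block_multiple_bounds(1)[OF n(2-4), of k] double_le_two_power[of "N k"] n(1)
    by linarith
qed

lemma separated_set_separated:
  assumes n: "n \<in> separated_set N k" and m: "m \<in> separated_set N l" and "(k,n) \<noteq> (l,m)"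
  shows "n + N k + N l \<le> m \<or> m + N k + N l \<le> n"
proof -
  obtain t j where n: "n = block_start k t + 2^(N k + 1) * j" "N k + 1 \<le> t" "0 < j"
    "j < 2^(t - (N k + 1))"
    using n unfolding separated_set_def by blast
  obtain t' j' where m: "m = block_start l t' + 2^(N l + 1) * j'" "N l + 1 \<le> t'" "0 < j'"
    "j' < 2^(t' - (N l + 1))"
    using m unfolding separated_set_def by blast
  note bn = block_multiple_bounds[OF n(2-4), of k] and bm = block_multiple_bounds[OF m(2-4), of l]
  have gk: "2 * N k \<le> 2^(N k + 1)" and gl: "2 * N l \<le> 2^(N l + 1)"
    by (rule double_le_two_power)+
  show ?thesis
  proof (cases "(k,t) = (l,t')")
    case True
    then have kl: "k = l" "t = t'" "j \<noteq> j'" using assms(3) n(1) m(1) by auto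
    have "2^(N k + 1) * j + 2^(N k + 1) \<le> 2^(N k + 1) * j' \<or>
          2^(N k + 1) * j' + 2^(N k + 1) \<le> (2::nat)^(N k + 1) * j"
    proof (cases "j < j'")
      case True
      then show ?thesis using mult_le_mono2[of "Suc j" j' "2^(N k + 1)"] by simp
    next
      case False
      then show ?thesis using kl(3) mult_le_mono2[of "Suc j'" j "2^(N k + 1)"] by simp
    qed
    moreover have "N l = N k" "m = block_start k t + 2^(N k + 1) * j'" using kl m(1) by simp_all
    ultimately show ?thesis using n(1) gk by linarith
  next
    case False
    from blocks_disjoint[OF False] show ?thesis
    proof
      assume "block_start k t + 2^t \<le> block_start l t'"
      then show ?thesis using bn(2) bm(1) n(1) m(1) gk gl by linarith
    next
      assume "block_start l t' + 2^t' \<le> block_start k t"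
      then show ?thesis using bn(1) bm(2) n(1) m(1) gk gl by linarith
    qed
  qed
qed

lemma lower_density_pos_if_card_ge:
  assumes "c > 0" and "eventually (\<lambda>M. c * real M \<le> real (card {n \<in> A. 1 \<le> n \<and> n \<le> M})) sequentially"
  shows "lower_density A > 0"
proof -
  have "eventually (\<lambda>M. ereal c \<le> ereal (real (card {n \<in> A. 1 \<le> n \<and> n \<le> M}) / real M)) sequentially"
    using assms(2) eventually_gt_at_top[of 0]
    by eventually_elim (simp add: field_simps)
  then have "ereal c \<le> lower_density A"
    unfolding lower_density_def by (rule Liminf_bounded)
  then show ?thesis using assms(1) by (simp add: less_le_trans[of 0 "ereal c"])
qed

lemma lower_density_mono: "A \<subseteq> B \<Longrightarrow> lower_density A \<le> lower_density B"
  unfolding lower_density_def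
  by (intro Liminf_mono always_eventually allI ereal_less_eq(3)[THEN iffD2] divide_right_mono
      of_nat_mono card_mono) auto

lemma card_separated_set_block_ge:
  assumes "N k + 2 \<le> t"
  shows "2^(t - N k - 2) \<le> card {n \<in> separated_set N k. 1 \<le> n \<and> n \<le> 2^(k+t+2)}"
proof -
  define s where "s = N k + 1"
  define C where "C = {n \<in> separated_set N k. 1 \<le> n \<and> n \<le> 2^(k+t+2)}"
  define f where "f j = block_start k t + 2^s * j" for j
  have "s \<le> t" using assms unfolding s_def by simp
  have "f ` {0<..<2^(t - s)} \<subseteq> C"
  proof
    fix n assume "n \<in> f ` {0<..<2^(t - s)}"
    then obtain j where j: "0 < j" "j < 2^(t - s)" "n = f j" by auto
    have "n \<in> separated_set N k"
      unfolding separated_set_def j(3) f_def s_def using \<open>s \<le> t\<close> j(1,2) unfolding s_def by blast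
    moreover have "1 \<le> n" using j(1,3) unfolding f_def by (simp add: Suc_le_eq)
    moreover have "n \<le> 2^(k+t+2)"
      using block_multiple_bounds(2)[OF \<open>s \<le> t\<close> j(1,2), of k] block_end_le[of k t]
      unfolding j(3) f_def by simp
    ultimately show "n \<in> C" unfolding C_def by simp
  qed
  moreover have "inj_on f {0<..<2^(t - s)}" unfolding inj_on_def f_def by simp
  moreover have "finite C" unfolding C_def by simp
  ultimately have "card {0<..<(2::nat)^(t - s)} \<le> card C" by (intro card_inj_on_le)
  moreover have "2^(t - s) = 2 * (2::nat)^(t - N k - 2)"
    using assms unfolding s_def by (simp flip: power_Suc)
  ultimately show ?thesis unfolding C_def by simp
qed

lemma card_separated_set_ge:
  assumes "2^(k + N k + 4) \<le> M"
  shows "real M / 2^(k + N k + 5) \<le> real (card {n \<in> separated_set N k. 1 \<le> n \<and> n \<le> M})"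
proof -
  define C where "C = {n \<in> separated_set N k. 1 \<le> n \<and> n \<le> M}"
  have "1 \<le> M" using assms one_le_power[of "2::nat"] by (meson le_trans one_le_numeral)
  then obtain r where r: "2^r \<le> M" "M < 2^(r+1)"
    using ex_power_ivl1[of 2 M] by auto
  have "(2::nat)^(k + N k + 4) < 2^(r+1)" using assms r(2) by linarith
  then have "k + N k + 4 < r + 1" by (rule power_less_imp_less_exp[rotated]) simp
  define t where "t = r - k - 2"
  have t: "N k + 2 \<le> t" "r = k + t + 2" using \<open>k + N k + 4 < r + 1\<close> by (simp_all add: t_def)
  have "2^(t - N k - 2) \<le> card {n \<in> separated_set N k. 1 \<le> n \<and> n \<le> 2^(k+t+2)}"
    using card_separated_set_block_ge[of N k t] t(1) by blast
  also have "\<dots> \<le> card C"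
    unfolding C_def using r(1) t(2) by (intro card_mono) auto
  finally have "2^(t - N k - 2) \<le> card C" .
  moreover have "(2::nat)^(r + 1) = 2^(k + N k + 5) * 2^(t - N k - 2)"
  proof -
    have "r + 1 = (k + N k + 5) + (t - N k - 2)" using t by simp
    then show ?thesis by (simp only: power_add)
  qed
  ultimately have "M < 2^(k + N k + 5) * card C"
    using r(2) mult_le_mono2[of "2^(t - N k - 2)" "card C" "2^(k + N k + 5)"] by linarith
  then have "real M < real (2^(k + N k + 5) * card C)" by (simp only: of_nat_less_iff)
  then have "real M < 2^(k + N k + 5) * real (card C)" by simp
  then show ?thesis unfolding C_def by (simp add: divide_le_eq mult.commute)
qed

lemma lower_density_separated_set: "lower_density (separated_set N k) > 0"
proof (rule lower_density_pos_if_card_ge)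
  show "eventually (\<lambda>M. 1 / 2^(k + N k + 5) * real M
          \<le> real (card {n \<in> separated_set N k. 1 \<le> n \<and> n \<le> M})) sequentially"
    using eventually_ge_at_top[of "2^(k + N k + 4)"]
    by eventually_elim (use card_separated_set_ge in simp)
qed simp

section \<open>Weak-star neighbourhoods of bounded sequences\<close>

abbreviation pairing :: "('i \<Rightarrow> real) \<Rightarrow> ('i \<Rightarrow> real) \<Rightarrow> real" where
  "pairing a y \<equiv> \<Sum>\<^sub>\<infinity>i. a i * y i"

lemma linf_iff: "y \<in> linf \<longleftrightarrow> (\<exists>B. \<forall>i. \<bar>y i\<bar> \<le> B)"
  unfolding linf_def bounded_iff by auto

lemma ell1_abs_summable_on: "a \<in> ell1 \<Longrightarrow> (\<lambda>i. \<bar>a i\<bar>) summable_on A"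
  unfolding ell1_def by (rule summable_on_subset) auto

lemma ell1_mult_bounded_abs_summable_on:
  assumes "a \<in> ell1" and "\<And>i. \<bar>d i\<bar> \<le> M"
  shows "(\<lambda>i. \<bar>a i * d i\<bar>) summable_on A"
proof (rule summable_on_comparison_test)
  show "(\<lambda>i. M * \<bar>a i\<bar>) summable_on A"
    by (rule summable_on_cmult_right[OF ell1_abs_summable_on[OF assms(1)]])
  show "\<bar>a i * d i\<bar> \<le> M * \<bar>a i\<bar>" for i
    using mult_left_mono[OF assms(2)[of i], of "\<bar>a i\<bar>"] by (simp add: abs_mult mult.commute)
qed simp

lemma ell1_mult_bounded_summable_on:
  "a \<in> ell1 \<Longrightarrow> (\<And>i. \<bar>d i\<bar> \<le> M) \<Longrightarrow> (\<lambda>i. a i * d i) summable_on A"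
  using ell1_mult_bounded_abs_summable_on summable_on_iff_abs_summable_on_real
  unfolding real_norm_def by blast

lemma pairing_diff:
  assumes "a \<in> ell1" "y \<in> linf" "x \<in> linf"
  shows "pairing a y - pairing a x = pairing a (\<lambda>i. y i - x i)"
proof -
  have "(\<lambda>i. a i * z i) summable_on UNIV" if "z \<in> linf" for z
    using that ell1_mult_bounded_summable_on[OF assms(1)] unfolding linf_iff by blast
  then have "pairing a y + (\<Sum>\<^sub>\<infinity>i. - (a i * x i)) = (\<Sum>\<^sub>\<infinity>i. a i * y i + - (a i * x i))"
    using assms(2,3) by (intro infsum_add[symmetric]) (auto simp: summable_on_uminus)
  then show ?thesis by (simp add: infsum_uminus right_diff_distrib)
qed

lemma ell1_tail_small:
  assumes "a \<in> ell1" and "\<delta> > 0"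
  shows "\<exists>F. finite F \<and> (\<Sum>\<^sub>\<infinity>i\<in>-F. \<bar>a i\<bar>) \<le> \<delta>"
proof -
  note summable = ell1_abs_summable_on[OF assms(1)]
  obtain F where F: "finite F" "dist (\<Sum>i\<in>F. \<bar>a i\<bar>) (\<Sum>\<^sub>\<infinity>i. \<bar>a i\<bar>) \<le> \<delta>"
    using infsum_finite_approximation[OF summable assms(2)] by blast
  have "(\<Sum>\<^sub>\<infinity>i. \<bar>a i\<bar>) = (\<Sum>\<^sub>\<infinity>i\<in>F. \<bar>a i\<bar>) + (\<Sum>\<^sub>\<infinity>i\<in>-F. \<bar>a i\<bar>)"
    using infsum_Un_disjoint[OF summable summable, of F "-F"] by (simp add: Un_commute)
  also have "(\<Sum>\<^sub>\<infinity>i\<in>F. \<bar>a i\<bar>) = (\<Sum>i\<in>F. \<bar>a i\<bar>)" using F(1) by simp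
  finally show ?thesis using F by (auto simp: dist_real_def)
qed

lemma abs_pairing_le:
  assumes a: "a \<in> ell1" and M: "\<And>i. \<bar>d i\<bar> \<le> M"
    and "0 \<le> \<eta>" and \<eta>: "\<And>i. i \<in> F \<Longrightarrow> \<bar>d i\<bar> \<le> \<eta>"
  shows "\<bar>pairing a d\<bar> \<le> \<eta> * (\<Sum>\<^sub>\<infinity>i. \<bar>a i\<bar>) + M * (\<Sum>\<^sub>\<infinity>i\<in>-F. \<bar>a i\<bar>)"
proof -
  have sd: "(\<lambda>i. \<bar>a i * d i\<bar>) summable_on S" for S
    by (rule ell1_mult_bounded_abs_summable_on[OF a M])
  note sa = ell1_abs_summable_on[OF a]
  have "\<bar>pairing a d\<bar> \<le> (\<Sum>\<^sub>\<infinity>i. \<bar>a i * d i\<bar>)"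
    using norm_infsum_bound[of "\<lambda>i. a i * d i" UNIV] sd unfolding real_norm_def by simp
  also have "\<dots> = (\<Sum>\<^sub>\<infinity>i\<in>F. \<bar>a i * d i\<bar>) + (\<Sum>\<^sub>\<infinity>i\<in>-F. \<bar>a i * d i\<bar>)"
    using infsum_Un_disjoint[OF sd sd, of F "-F"] by (simp add: Un_commute)
  also have "(\<Sum>\<^sub>\<infinity>i\<in>F. \<bar>a i * d i\<bar>) \<le> (\<Sum>\<^sub>\<infinity>i\<in>F. \<eta> * \<bar>a i\<bar>)"
    using \<eta> by (intro infsum_mono sd summable_on_cmult_right sa)
      (metis abs_ge_zero abs_mult mult.commute mult_left_mono)
  also have "\<dots> = \<eta> * (\<Sum>\<^sub>\<infinity>i\<in>F. \<bar>a i\<bar>)" by (rule infsum_cmult_right')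
  also have "\<dots> \<le> \<eta> * (\<Sum>\<^sub>\<infinity>i. \<bar>a i\<bar>)"
    using \<open>0 \<le> \<eta>\<close> by (intro mult_left_mono infsum_mono2 sa) auto
  also have "(\<Sum>\<^sub>\<infinity>i\<in>-F. \<bar>a i * d i\<bar>) \<le> (\<Sum>\<^sub>\<infinity>i\<in>-F. M * \<bar>a i\<bar>)"
    using M by (intro infsum_mono sd summable_on_cmult_right sa)
      (metis abs_ge_zero abs_mult mult.commute mult_left_mono)
  also have "\<dots> = M * (\<Sum>\<^sub>\<infinity>i\<in>-F. \<bar>a i\<bar>)" by (rule infsum_cmult_right')
  finally show ?thesis by simp
qed

lemma ell1_pairing_small:
  assumes a: "a \<in> ell1" and "\<epsilon> > 0"
  shows "\<exists>F \<eta>. finite F \<and> \<eta> > 0 \<and>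
    (\<forall>d. (\<forall>i. \<bar>d i\<bar> \<le> M) \<longrightarrow> (\<forall>i\<in>F. \<bar>d i\<bar> \<le> \<eta>) \<longrightarrow> \<bar>pairing a d\<bar> < \<epsilon>)"
proof -
  define S where "S = (\<Sum>\<^sub>\<infinity>i. \<bar>a i\<bar>)"
  have "S \<ge> 0" unfolding S_def by (simp add: infsum_nonneg)
  obtain F where F: "finite F" "(\<Sum>\<^sub>\<infinity>i\<in>-F. \<bar>a i\<bar>) \<le> \<epsilon> / (2 * (\<bar>M\<bar> + 1))"
    using ell1_tail_small[OF a, of "\<epsilon> / (2 * (\<bar>M\<bar> + 1))"] \<open>\<epsilon> > 0\<close> by auto
  define \<eta> where "\<eta> = \<epsilon> / (2 * (S + 1))"
  have "\<eta> > 0" unfolding \<eta>_def using \<open>\<epsilon> > 0\<close> \<open>S \<ge> 0\<close> by simp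
  have "\<bar>pairing a d\<bar> < \<epsilon>" if M: "\<forall>i. \<bar>d i\<bar> \<le> M" and \<eta>: "\<forall>i\<in>F. \<bar>d i\<bar> \<le> \<eta>" for d
  proof -
    have "M \<ge> 0" using M abs_ge_zero order_trans by blast
    have "\<bar>pairing a d\<bar> \<le> \<eta> * S + M * (\<Sum>\<^sub>\<infinity>i\<in>-F. \<bar>a i\<bar>)"
      unfolding S_def using abs_pairing_le[OF a _ _, of d M \<eta> F] M \<eta> \<open>\<eta> > 0\<close> by simp
    also have "\<eta> * S < \<epsilon> / 2"
      unfolding \<eta>_def using \<open>\<epsilon> > 0\<close> \<open>S \<ge> 0\<close> by (simp add: field_simps)
    also have "M * (\<Sum>\<^sub>\<infinity>i\<in>-F. \<bar>a i\<bar>) \<le> M * (\<epsilon> / (2 * (\<bar>M\<bar> + 1)))"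
      using F(2) \<open>M \<ge> 0\<close> by (rule mult_left_mono)
    also have "\<dots> < \<epsilon> / 2"
      using \<open>\<epsilon> > 0\<close> \<open>M \<ge> 0\<close> by (simp add: field_simps)
    finally show ?thesis by simp
  qed
  then show ?thesis using F(1) \<open>\<eta> > 0\<close> by blast
qed

lemma ell1_pairings_small:
  assumes "finite Fa" "Fa \<subseteq> ell1" "\<epsilon> > 0"
  shows "\<exists>F \<eta>. finite F \<and> \<eta> > 0 \<and>
    (\<forall>d. (\<forall>i. \<bar>d i\<bar> \<le> M) \<longrightarrow> (\<forall>i\<in>F. \<bar>d i\<bar> \<le> \<eta>) \<longrightarrow> (\<forall>a\<in>Fa. \<bar>pairing a d\<bar> < \<epsilon>))"
  using assms(1,2)
proof (induction Fa rule: finite_induct)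
  case empty
  show ?case by (intro exI[of _ "{}"] exI[of _ 1]) simp
next
  case (insert a Fa)
  obtain F1 \<eta>1 where 1: "finite F1" "\<eta>1 > 0"
    "\<forall>d. (\<forall>i. \<bar>d i\<bar> \<le> M) \<longrightarrow> (\<forall>i\<in>F1. \<bar>d i\<bar> \<le> \<eta>1) \<longrightarrow> \<bar>pairing a d\<bar> < \<epsilon>"
    using ell1_pairing_small[of a \<epsilon> M] insert.prems assms(3) by auto
  obtain F2 \<eta>2 where 2: "finite F2" "\<eta>2 > 0"
    "\<forall>d. (\<forall>i. \<bar>d i\<bar> \<le> M) \<longrightarrow> (\<forall>i\<in>F2. \<bar>d i\<bar> \<le> \<eta>2) \<longrightarrow> (\<forall>b\<in>Fa. \<bar>pairing b d\<bar> < \<epsilon>)"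
    using insert.IH insert.prems by auto
  show ?case
  proof (intro exI[of _ "F1 \<union> F2"] exI[of _ "min \<eta>1 \<eta>2"] conjI allI impI)
    fix d :: "'a \<Rightarrow> real" assume "\<forall>i. \<bar>d i\<bar> \<le> M" "\<forall>i\<in>F1 \<union> F2. \<bar>d i\<bar> \<le> min \<eta>1 \<eta>2"
    then show "\<forall>b\<in>insert a Fa. \<bar>pairing b d\<bar> < \<epsilon>" using 1(3) 2(3) by simp
  qed (use 1 2 in auto)
qed

lemma weak_star_topspace: "topspace weak_star = linf"
proof -
  have "UNIV \<in> {{y. pairing a y \<in> V} | a V. a \<in> ell1 \<and> open V}"
    unfolding ell1_def by (intro CollectI exI[of _ "\<lambda>i. 0"] exI[of _ UNIV]) auto
  then show ?thesis unfolding weak_star_def by auto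
qed

lemma generate_topology_on_pairing_nhds:
  assumes "generate_topology_on {{y. pairing a y \<in> V} | a V. a \<in> ell1 \<and> open V} U" and "x \<in> U"
  shows "\<exists>Fa \<epsilon>. finite Fa \<and> Fa \<subseteq> ell1 \<and> \<epsilon> > 0 \<and>
    {y. \<forall>a\<in>Fa. \<bar>pairing a y - pairing a x\<bar> < \<epsilon>} \<subseteq> U"
  using assms
proof (induction arbitrary: x)
  case (Int U1 U2)
  obtain F1 \<epsilon>1 where 1: "finite F1" "F1 \<subseteq> ell1" "\<epsilon>1 > 0"
    "{y. \<forall>a\<in>F1. \<bar>pairing a y - pairing a x\<bar> < \<epsilon>1} \<subseteq> U1"
    using Int.IH(1)[of x] Int.prems by blast
  obtain F2 \<epsilon>2 where 2: "finite F2" "F2 \<subseteq> ell1" "\<epsilon>2 > 0"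
    "{y. \<forall>a\<in>F2. \<bar>pairing a y - pairing a x\<bar> < \<epsilon>2} \<subseteq> U2"
    using Int.IH(2)[of x] Int.prems by blast
  show ?case
    by (rule exI[of _ "F1 \<union> F2"], rule exI[of _ "min \<epsilon>1 \<epsilon>2"]) (use 1 2 in fastforce)
next
  case (UN K)
  then obtain U where "U \<in> K" "x \<in> U" by blast
  then show ?case using UN.IH[of U x] by blast
next
  case (Basis s)
  then obtain a V where s: "s = {y. pairing a y \<in> V}" "a \<in> ell1" "open V" by blast
  then obtain \<epsilon> where "\<epsilon> > 0" "ball (pairing a x) \<epsilon> \<subseteq> V"
    using Basis.prems open_contains_ball by blast
  then show ?case
    using s by (intro exI[of _ "{a}"] exI[of _ \<epsilon>]) (auto simp: dist_real_def abs_minus_commute)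
qed simp

lemma openin_weak_star_pairing_nhds:
  assumes "openin weak_star U" "x \<in> U"
  shows "\<exists>Fa \<epsilon>. finite Fa \<and> Fa \<subseteq> ell1 \<and> \<epsilon> > 0 \<and>
    {y\<in>linf. \<forall>a\<in>Fa. \<bar>pairing a y - pairing a x\<bar> < \<epsilon>} \<subseteq> U"
proof -
  obtain V where V: "generate_topology_on {{y. pairing a y \<in> V} | a V. a \<in> ell1 \<and> open V} V"
    "U = V \<inter> linf"
    using assms(1) unfolding weak_star_def openin_subtopology openin_topology_generated_by_iff by blast
  then show ?thesis
    using generate_topology_on_pairing_nhds[OF V(1), of x] assms(2) by blast
qed

lemma freq_hypercyclic_weak_starI:
  fixes T :: "('i \<Rightarrow> real) \<Rightarrow> 'i \<Rightarrow> real"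
  assumes "y \<in> linf"
    and approx: "\<And>z. z \<in> linf \<Longrightarrow> \<exists>M. \<forall>F \<eta>. finite F \<longrightarrow> \<eta> > 0 \<longrightarrow>
      (\<exists>A. lower_density A > 0 \<and>
        (\<forall>n\<in>A. (\<forall>i. \<bar>(T^^n) y i - z i\<bar> \<le> M) \<and> (\<forall>i\<in>F. \<bar>(T^^n) y i - z i\<bar> \<le> \<eta>)))"
  shows "freq_hypercyclic weak_star T"
  unfolding freq_hypercyclic_def
proof (intro bexI allI impI)
  show "y \<in> topspace weak_star" using assms(1) by (simp add: weak_star_topspace)
  fix U :: "('i \<Rightarrow> real) set" assume U: "openin weak_star U \<and> U \<noteq> {}"
  then obtain x where "x \<in> U" by blast
  then have "x \<in> linf" using openin_subset U weak_star_topspace by blast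
  then obtain B where B: "\<And>i. \<bar>x i\<bar> \<le> B" using linf_iff by blast
  obtain Fa \<epsilon> where Fa: "finite Fa" "Fa \<subseteq> ell1" "\<epsilon> > 0"
    "{y\<in>linf. \<forall>a\<in>Fa. \<bar>pairing a y - pairing a x\<bar> < \<epsilon>} \<subseteq> U"
    using openin_weak_star_pairing_nhds[OF conjunct1[OF U] \<open>x \<in> U\<close>] by blast
  obtain M where M: "\<forall>F \<eta>. finite F \<longrightarrow> \<eta> > 0 \<longrightarrow> (\<exists>A. lower_density A > 0 \<and>
      (\<forall>n\<in>A. (\<forall>i. \<bar>(T^^n) y i - x i\<bar> \<le> M) \<and> (\<forall>i\<in>F. \<bar>(T^^n) y i - x i\<bar> \<le> \<eta>)))"
    using approx[OF \<open>x \<in> linf\<close>] by blast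
  obtain F \<eta> where F: "finite F" "\<eta> > 0"
    "\<forall>d. (\<forall>i. \<bar>d i\<bar> \<le> M) \<longrightarrow> (\<forall>i\<in>F. \<bar>d i\<bar> \<le> \<eta>) \<longrightarrow> (\<forall>a\<in>Fa. \<bar>pairing a d\<bar> < \<epsilon>)"
    using ell1_pairings_small[OF Fa(1-3)] by blast
  from M[rule_format, OF F(1,2)] obtain A where A: "lower_density A > 0" "\<forall>n\<in>A.
      (\<forall>i. \<bar>(T^^n) y i - x i\<bar> \<le> M) \<and> (\<forall>i\<in>F. \<bar>(T^^n) y i - x i\<bar> \<le> \<eta>)"
    by blast
  have "A \<subseteq> {n. (T^^n) y \<in> U}"
  proof
    fix n assume "n \<in> A"
    then have dM: "\<forall>i. \<bar>(T^^n) y i - x i\<bar> \<le> M" and d\<eta>: "\<forall>i\<in>F. \<bar>(T^^n) y i - x i\<bar> \<le> \<eta>"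
      using A(2) by blast+
    have "\<bar>(T^^n) y i\<bar> \<le> M + B" for i
      using spec[OF dM, of i] B[of i] abs_triangle_ineq[of "(T^^n) y i - x i" "x i"] by simp
    then have "(T^^n) y \<in> linf" using linf_iff by blast
    moreover have "\<bar>pairing a ((T^^n) y) - pairing a x\<bar> < \<epsilon>" if "a \<in> Fa" for a
      using F(3) dM d\<eta> that Fa(2) pairing_diff[OF _ \<open>(T^^n) y \<in> linf\<close> \<open>x \<in> linf\<close>] by auto
    ultimately show "n \<in> {n. (T^^n) y \<in> U}" using Fa(4) by blast
  qed
  then show "lower_density {n. (T^^n) y \<in> U} > 0"
    using lower_density_mono A(1) by (blast intro: less_le_trans)
qed

section \<open>Rational patterns\<close>

definition pattern :: "nat \<Rightarrow> ('i::countable \<times> rat) list" where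
  "pattern k = from_nat k"

definition window :: "nat \<Rightarrow> 'i::countable set" where
  "window k = fst ` set (pattern k)"

definition pattern_value :: "nat \<Rightarrow> 'i::countable \<Rightarrow> real" where
  "pattern_value k t = of_rat (the (map_of (pattern k) t))"

lemma finite_window: "finite (window k)"
  unfolding window_def by simp

lemma pattern_approximates:
  fixes z :: "'i::countable \<Rightarrow> real"
  assumes "finite F" and "e > 0"
  shows "\<exists>k. window k = F \<and> (\<forall>t\<in>F. \<bar>pattern_value k t - z t\<bar> < e)"
proof -
  have "\<forall>t. \<exists>q. \<bar>of_rat q - z t\<bar> < e"
  proof
    fix t
    obtain r where r: "r \<in> \<rat>" "z t < r" "r < z t + e"
      using Rats_dense_in_real[of "z t" "z t + e"] assms(2) by auto
    from r(1) obtain q where "r = of_rat q" by (cases rule: Rats_cases)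
    then show "\<exists>q. \<bar>of_rat q - z t\<bar> < e" using r(2,3) by (intro exI[of _ q]) simp
  qed
  then obtain q where q: "\<And>t. \<bar>of_rat (q t) - z t\<bar> < e" by metis
  obtain ts where ts: "set ts = F" using finite_list[OF assms(1)] by blast
  define k where "k = to_nat (map (\<lambda>t. (t, q t)) ts)"
  have pattern: "pattern k = map (\<lambda>t. (t, q t)) ts" unfolding pattern_def k_def by simp
  have "window k = F" unfolding window_def pattern ts[symmetric] by force
  moreover have "pattern_value k t = of_rat (q t)" if "t \<in> F" for t
    using that unfolding pattern_value_def pattern ts[symmetric] by (simp add: map_of_map_restrict)
  ultimately show ?thesis using q by auto
qed

section \<open>Weighted shifts with a weight profile\<close>

text \<open>W abstracts the partial products w(1) \<cdot> ... \<cdot> w(i) of the weights (on the integers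
  extended to negative i by division), and mag is a size function such as the absolute value.\<close>

locale weight_profile =
  fixes w W :: "'i::{comm_semiring_1_cancel,countable} \<Rightarrow> real" and mag :: "'i \<Rightarrow> nat"
  assumes W_pos: "W i > 0"
    and W_succ: "W (i + 1) = w (i + 1) * W i"
    and W_tendsto: "filterlim W at_top cofinite"
    and mag_translate: "s + of_nat n = t + of_nat m \<Longrightarrow> n \<le> m + mag s + mag t"
begin

lemma w_succ_eq: "w (i + 1) = W (i + 1) / W i"
  using W_succ[of i] W_pos[of i] by simp

lemma wshift_funpow: "(wshift w ^^ n) y i = W (i + of_nat n) / W i * y (i + of_nat n)"
proof (induction n arbitrary: i)
  case 0
  then show ?case using W_pos[of i] by simp
next
  case (Suc n)
  have "(wshift w ^^ Suc n) y i = w (i + 1) * (wshift w ^^ n) y (i + 1)"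
    by (simp add: wshift_def)
  also have "\<dots> = w (i + 1) * (W (i + 1 + of_nat n) / W (i + 1) * y (i + 1 + of_nat n))"
    using Suc by simp
  also have "\<dots> = W (i + 1 + of_nat n) / W i * y (i + 1 + of_nat n)"
    using W_pos[of i] W_pos[of "i + 1"] unfolding w_succ_eq by simp
  also have "i + 1 + of_nat n = i + of_nat (Suc n)" by (simp add: ac_simps)
  finally show ?case .
qed

text \<open>W is too small on low_set k to absorb the k-th pattern. Occurrences of patterns placed at
  distance at least gap apart therefore neither overlap nor land on a low set.\<close>

definition threshold :: "nat \<Rightarrow> real" where
  "threshold k = (\<Sum>t\<in>window k. \<bar>pattern_value k t\<bar> * W t)"

definition low_set :: "nat \<Rightarrow> 'i set" where
  "low_set k = {s. W s < threshold k}"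

definition gap :: "nat \<Rightarrow> nat" where
  "gap k = 1 + (\<Sum>t\<in>window k. mag t) + (\<Sum>s\<in>low_set k. mag s)"

definition hits :: "nat \<Rightarrow> nat set" where
  "hits k = separated_set gap k"

lemma finite_low_set: "finite (low_set k)"
  using W_tendsto unfolding filterlim_at_top eventually_cofinite low_set_def
  by (simp add: not_le)

lemma mag_window_lt_gap: "t \<in> window k \<Longrightarrow> mag t < gap k"
  using member_le_sum[of t "window k" mag, OF _ _ finite_window] unfolding gap_def by simp

lemma mag_lt_gap:
  assumes "t \<in> window k" "s \<in> low_set k"
  shows "mag t + mag s < gap k"
  using member_le_sum[OF assms(1) _ finite_window, of mag]
    member_le_sum[OF assms(2) _ finite_low_set, of mag]
  unfolding gap_def by simp

lemma pattern_le_W: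
  assumes "t \<in> window l" and "s + of_nat n = t + of_nat m" and "m + gap l \<le> n \<or> n + gap l \<le> m"
  shows "\<bar>pattern_value l t\<bar> * W t \<le> W s"
proof -
  have "s \<notin> low_set l"
  proof
    assume "s \<in> low_set l"
    then have "mag t + mag s < gap l" using mag_lt_gap assms(1) by blast
    moreover have "n \<le> m + mag s + mag t" "m \<le> n + mag t + mag s"
      using mag_translate assms(2) by (metis, metis)
    ultimately show False using assms(3) by linarith
  qed
  then have "threshold l \<le> W s" unfolding low_set_def by simp
  moreover have "\<bar>pattern_value l t\<bar> * W t \<le> threshold l"
    unfolding threshold_def using assms(1) finite_window
    by (intro member_le_sum mult_nonneg_nonneg abs_ge_zero less_imp_le[OF W_pos])
  ultimately show ?thesis by linarith
qed

lemma hits_translates_disjoint: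
  fixes s t :: 'i
  assumes "n \<in> hits k" "m \<in> hits l" "s \<in> window k" "t \<in> window l"
    and "s + of_nat n = t + of_nat m"
  shows "k = l \<and> n = m"
proof (rule ccontr)
  assume "\<not> (k = l \<and> n = m)"
  then have "n + gap k + gap l \<le> m \<or> m + gap k + gap l \<le> n"
    using separated_set_separated assms(1,2) unfolding hits_def by blast
  moreover have "mag s < gap k" "mag t < gap l"
    using mag_window_lt_gap assms(3,4) by blast+
  moreover have "n \<le> m + mag s + mag t" "m \<le> n + mag t + mag s"
    using mag_translate assms(5) by (metis, metis)
  ultimately show False by linarith
qed

definition occurrences :: "'i \<Rightarrow> (nat \<times> nat \<times> 'i) set" where
  "occurrences j = {(k, n, t). n \<in> hits k \<and> t \<in> window k \<and> t + of_nat n = j}"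

definition seed :: "'i \<Rightarrow> real" where
  "seed j = (if occurrences j = {} then 0
     else (case THE p. p \<in> occurrences j of (k, n, t) \<Rightarrow> pattern_value k t * W t / W j))"

lemma occurrences_unique:
  assumes "p \<in> occurrences j" "q \<in> occurrences j"
  shows "p = q"
proof -
  obtain k n t l m s where p: "p = (k, n, t)" "n \<in> hits k" "t \<in> window k" "t + of_nat n = j"
    and q: "q = (l, m, s)" "m \<in> hits l" "s \<in> window l" "s + of_nat m = j"
    using assms unfolding occurrences_def by blast
  then have "k = l" "n = m" using hits_translates_disjoint[of n k m l t s] by simp_all
  moreover from this(2) have "t = s" using p(4) q(4) by (metis add_right_cancel)
  ultimately show ?thesis using p(1) q(1) by simp
qed

lemma seed_eq:
  assumes "(k, n, t) \<in> occurrences j"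
  shows "seed j = pattern_value k t * W t / W j"
proof -
  have "(THE p. p \<in> occurrences j) = (k, n, t)"
    using assms occurrences_unique by blast
  then show ?thesis using assms unfolding seed_def by auto
qed

lemma abs_seed_le_1: "\<bar>seed j\<bar> \<le> 1"
proof (cases "occurrences j = {}")
  case False
  then obtain k n t where occ: "(k, n, t) \<in> occurrences j" by auto
  then have "t \<in> window k" "j + of_nat 0 = t + of_nat n" "n + gap k \<le> 0 \<or> 0 + gap k \<le> n"
    using separated_set_ge unfolding occurrences_def hits_def by auto
  then have "\<bar>pattern_value k t\<bar> * W t \<le> W j" by (rule pattern_le_W)
  then show ?thesis
    unfolding seed_eq[OF occ] using W_pos[of j] W_pos[of t] by (simp add: abs_mult divide_le_eq)
qed (simp add: seed_def)

lemma orbit_on_window: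
  assumes "n \<in> hits k" "t \<in> window k"
  shows "(wshift w ^^ n) seed t = pattern_value k t"
proof -
  have occ: "(k, n, t) \<in> occurrences (t + of_nat n)" using assms unfolding occurrences_def by simp
  show ?thesis unfolding wshift_funpow seed_eq[OF occ] using W_pos[of t] W_pos[of "t + of_nat n"] by simp
qed

lemma orbit_off_window:
  assumes n: "n \<in> hits k" and "i \<notin> window k"
  shows "\<bar>(wshift w ^^ n) seed i\<bar> \<le> 1"
proof (cases "occurrences (i + of_nat n) = {}")
  case True
  then show ?thesis unfolding wshift_funpow by (simp add: seed_def)
next
  case False
  then obtain l m t where occ: "(l, m, t) \<in> occurrences (i + of_nat n)" by auto
  then have m: "m \<in> hits l" "t \<in> window l" "i + of_nat n = t + of_nat m"
    unfolding occurrences_def by auto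
  have "(k, n) \<noteq> (l, m)" using m(2,3) assms(2) by auto
  then have "n + gap k + gap l \<le> m \<or> m + gap k + gap l \<le> n"
    using separated_set_separated n m(1) unfolding hits_def by blast
  then have "\<bar>pattern_value l t\<bar> * W t \<le> W i"
    using pattern_le_W[OF m(2,3)] by linarith
  moreover have "(wshift w ^^ n) seed i = pattern_value l t * W t / W i"
    unfolding wshift_funpow seed_eq[OF occ] using W_pos[of "i + of_nat n"] by simp
  ultimately show ?thesis using W_pos[of i] W_pos[of t] by (simp add: abs_mult divide_le_eq)
qed

theorem freq_hypercyclic_wshift: "freq_hypercyclic weak_star (wshift w)"
proof (rule freq_hypercyclic_weak_starI)
  show "seed \<in> linf" using abs_seed_le_1 linf_iff by blast
next
  fix z :: "'i \<Rightarrow> real" assume "z \<in> linf"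
  then obtain B where B: "\<And>i. \<bar>z i\<bar> \<le> B" using linf_iff by blast
  show "\<exists>M. \<forall>F \<eta>. finite F \<longrightarrow> \<eta> > 0 \<longrightarrow> (\<exists>A. lower_density A > 0 \<and>
      (\<forall>n\<in>A. (\<forall>i. \<bar>(wshift w ^^ n) seed i - z i\<bar> \<le> M) \<and> (\<forall>i\<in>F. \<bar>(wshift w ^^ n) seed i - z i\<bar> \<le> \<eta>)))"
  proof (intro exI[of _ "1 + B"] allI impI)
    fix F :: "'i set" and \<eta> :: real assume "finite F" "\<eta> > 0"
    then obtain k where k: "window k = F" "\<And>t. t \<in> F \<Longrightarrow> \<bar>pattern_value k t - z t\<bar> < min \<eta> 1"
      using pattern_approximates[of F "min \<eta> 1" z] by auto
    have "(\<forall>i. \<bar>(wshift w ^^ n) seed i - z i\<bar> \<le> 1 + B) \<and> (\<forall>i\<in>F. \<bar>(wshift w ^^ n) seed i - z i\<bar> \<le> \<eta>)"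
      if "n \<in> hits k" for n
    proof (intro conjI allI ballI)
      fix i
      show "\<bar>(wshift w ^^ n) seed i - z i\<bar> \<le> 1 + B"
      proof (cases "i \<in> F")
        case True
        then show ?thesis using k orbit_on_window[OF that] B[of i] by fastforce
      next
        case False
        then show ?thesis using k(1) orbit_off_window[OF that] B[of i] by fastforce
      qed
    next
      fix i assume "i \<in> F"
      then show "\<bar>(wshift w ^^ n) seed i - z i\<bar> \<le> \<eta>" using k orbit_on_window[OF that] by fastforce
    qed
    then show "\<exists>A. lower_density A > 0 \<and>
      (\<forall>n\<in>A. (\<forall>i. \<bar>(wshift w ^^ n) seed i - z i\<bar> \<le> 1 + B) \<and> (\<forall>i\<in>F. \<bar>(wshift w ^^ n) seed i - z i\<bar> \<le> \<eta>))"
      using lower_density_separated_set unfolding hits_def by blast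
  qed
qed

end

section \<open>Unilateral and bilateral weights\<close>

lemma weight_profile_nat:
  fixes w :: "nat \<Rightarrow> real"
  assumes "\<And>n. n \<ge> 1 \<Longrightarrow> w n > 0" and "filterlim (\<lambda>n. \<Prod>k=1..n. w k) at_top sequentially"
  shows "weight_profile w (\<lambda>n. \<Prod>k=1..n. w k) (\<lambda>n. n)"
proof
  show "(\<Prod>k=1..n. w k) > 0" for n using assms(1) by (intro prod_pos) simp
  show "(\<Prod>k=1..n + 1. w k) = w (n + 1) * (\<Prod>k=1..n. w k)" for n
    by (simp add: prod.nat_ivl_Suc')
  show "filterlim (\<lambda>n. \<Prod>k=1..n. w k) at_top cofinite"
    using assms(2) by (simp add: cofinite_eq_sequentially)
  show "s + of_nat n = t + of_nat m \<Longrightarrow> n \<le> m + s + t" for s t n m :: nat by simp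
qed

lemma filterlim_cofinite_intI:
  fixes f :: "int \<Rightarrow> 'a"
  assumes "filterlim (\<lambda>n. f (int n)) F sequentially" and "filterlim (\<lambda>n. f (- int n)) F sequentially"
  shows "filterlim f F cofinite"
  unfolding filterlim_def le_filter_def eventually_filtermap eventually_cofinite
proof (intro allI impI)
  fix P assume "eventually P F"
  then have "finite {n. \<not> P (f (int n))}" "finite {n. \<not> P (f (- int n))}"
    using assms unfolding filterlim_iff cofinite_eq_sequentially[symmetric] eventually_cofinite
    by blast+
  moreover have "{j. \<not> P (f j)} \<subseteq> int ` {n. \<not> P (f (int n))} \<union> (\<lambda>n. - int n) ` {n. \<not> P (f (- int n))}"
  proof
    fix j assume "j \<in> {j. \<not> P (f j)}"
    then show "j \<in> int ` {n. \<not> P (f (int n))} \<union> (\<lambda>n. - int n) ` {n. \<not> P (f (- int n))}"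
    proof (cases "0 \<le> j")
      case True
      then show ?thesis using \<open>j \<in> {j. \<not> P (f j)}\<close> by (intro UnI1 rev_image_eqI[of "nat j"]) auto
    next
      case False
      then show ?thesis using \<open>j \<in> {j. \<not> P (f j)}\<close> by (intro UnI2 rev_image_eqI[of "nat (- j)"]) auto
    qed
  qed
  ultimately show "finite {j. \<not> P (f j)}" by (meson finite_Un finite_imageI finite_subset)
qed

definition bilateral_weight_profile :: "(int \<Rightarrow> real) \<Rightarrow> int \<Rightarrow> real" where
  "bilateral_weight_profile w j =
     (if 0 \<le> j then \<Prod>k=1..nat j. w (int k) else inverse (\<Prod>k<nat (- j). w (- int k)))"

lemma weight_profile_int:
  fixes w :: "int \<Rightarrow> real"
  assumes pos: "\<And>n. w n > 0"
    and right: "filterlim (\<lambda>n::nat. \<Prod>k=1..n. w (int k)) at_top sequentially"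
    and left: "(\<lambda>n::nat. \<Prod>k=1..n. w (- int k)) \<longlonglongrightarrow> 0"
  shows "weight_profile w (bilateral_weight_profile w) (\<lambda>j. nat \<bar>j\<bar>)"
proof
  show "bilateral_weight_profile w j > 0" for j
    unfolding bilateral_weight_profile_def using pos by (simp add: prod_pos)
  show "bilateral_weight_profile w (j + 1) = w (j + 1) * bilateral_weight_profile w j" for j
  proof (cases "0 \<le> j")
    case True
    then have "nat (j + 1) = Suc (nat j)" by simp
    then show ?thesis using True unfolding bilateral_weight_profile_def by (simp add: prod.nat_ivl_Suc' add.commute)
  next
    case False
    then have "nat (- j) = Suc (nat (- (j + 1)))" by simp
    then have "(\<Prod>k<nat (- j). w (- int k)) = w (j + 1) * (\<Prod>k<nat (- (j + 1)). w (- int k))"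
      using False by (simp add: add.commute)
    then show ?thesis
      unfolding bilateral_weight_profile_def using False pos[of "j + 1"] by (simp add: field_simps)
  qed
  show "filterlim (bilateral_weight_profile w) at_top cofinite"
  proof (rule filterlim_cofinite_intI)
    show "filterlim (\<lambda>n. bilateral_weight_profile w (int n)) at_top sequentially"
      using right unfolding bilateral_weight_profile_def by simp
    have "(\<Prod>k<Suc n. w (- int k)) = w 0 * (\<Prod>k=1..n. w (- int k))" for n
      unfolding One_nat_def prod.atLeast1_atMost_eq prod.lessThan_Suc_shift by simp
    then have "(\<lambda>n. \<Prod>k<Suc n. w (- int k)) \<longlonglongrightarrow> 0"
      using tendsto_mult_right_zero[OF left] by simp
    then have "filterlim (\<lambda>n. inverse (\<Prod>k<Suc n. w (- int k))) at_top sequentially"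
      by (rule filterlim_inverse_at_top) (intro always_eventually allI prod_pos pos)
    moreover have "bilateral_weight_profile w (- int (Suc n)) = inverse (\<Prod>k<Suc n. w (- int k))" for n
      unfolding bilateral_weight_profile_def by (simp only: nat_int minus_minus) simp
    ultimately show "filterlim (\<lambda>n. bilateral_weight_profile w (- int n)) at_top sequentially"
      using filterlim_sequentially_Suc[of "\<lambda>n. bilateral_weight_profile w (- int n)"] by simp
  qed
  show "s + of_nat n = t + of_nat m \<Longrightarrow> n \<le> m + nat \<bar>s\<bar> + nat \<bar>t\<bar>" for s t :: int and n m
    by linarith
qed

theorem proposition4p9:
  shows "(\<forall>w :: nat \<Rightarrow> real.
            (\<forall>n\<ge>1. w n > 0) \<and> bdd_above (w ` {1..}) \<and>
            filterlim (\<lambda>n. \<Prod>k=1..n. w k) at_top sequentially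
            \<longrightarrow> freq_hypercyclic (weak_star :: (nat \<Rightarrow> real) topology) (wshift w))
       \<and> (\<forall>w :: int \<Rightarrow> real.
            (\<forall>n. w n > 0) \<and> bdd_above (range w) \<and>
            filterlim (\<lambda>n::nat. \<Prod>k=1..n. w (int k)) at_top sequentially \<and>
            (\<lambda>n::nat. \<Prod>k=1..n. w (- int k)) \<longlonglongrightarrow> 0
            \<longrightarrow> freq_hypercyclic (weak_star :: (int \<Rightarrow> real) topology) (wshift w))"
proof (intro conjI allI impI)
  fix w :: "nat \<Rightarrow> real"
  assume "(\<forall>n\<ge>1. w n > 0) \<and> bdd_above (w ` {1..}) \<and>
    filterlim (\<lambda>n. \<Prod>k=1..n. w k) at_top sequentially"
  then have "weight_profile w (\<lambda>n. \<Prod>k=1..n. w k) (\<lambda>n. n)"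
    by (intro weight_profile_nat) auto
  then show "freq_hypercyclic weak_star (wshift w)"
    by (rule weight_profile.freq_hypercyclic_wshift)
next
  fix w :: "int \<Rightarrow> real"
  assume "(\<forall>n. w n > 0) \<and> bdd_above (range w) \<and>
    filterlim (\<lambda>n::nat. \<Prod>k=1..n. w (int k)) at_top sequentially \<and>
    (\<lambda>n::nat. \<Prod>k=1..n. w (- int k)) \<longlonglongrightarrow> 0"
  then have "weight_profile w (bilateral_weight_profile w) (\<lambda>j. nat \<bar>j\<bar>)"
    by (intro weight_profile_int) auto
  then show "freq_hypercyclic weak_star (wshift w)"
    by (rule weight_profile.freq_hypercyclic_wshift)
qed

end
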